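(* Let $\mathcal{T}$ be a projective Fraïssé family of finite trees whose distinguished epimorphisms are monotone and which allows splitting edges. Let $\mathbb{G}$ be its projective Fraïssé limit and $\pi\colon\mathbb{G}\to|\mathbb{G}|$ its topological realization. If $p\in|\mathbb{G}|$ is a ramification point of the dendrite $|\mathbb{G}|$, then there is a unique $p'\in\mathbb{G}$ with $\pi(p')=p$.
   Context: Graphs have reflexive symmetric edge relations; topological graphs carry a compact, Hausdorff, zero-dimensional, second countable topology with closed edge set; finite graphs are discrete. An epimorphism $g\colon B\to A$ of topological graphs is a continuous surjection with: $\langle a_1,a_2\rangle\in E(A)$ iff some $b_i\in g^{-1}(a_i)$ satisfy $\langle b_1,b_2\rangle\in E(B)$. A topological graph is disconnected if its vertex set splits into two nonempty disjoint closed sets with no edges between them, and connected otherwise (subsets carry the induced edges and subspace topology). An epimorphism is monotone if every fibre $g^{-1}(a)$ is connected. A finite tree is a finite connected graph without cycles of nontrivial edges. A projective Fraïssé family is a class of finite graphs with a distinguished class of epimorphisms, countably many up to isomorphism, containing identities, closed under composition, with the joint projection property (any $A,B$ have a common $C$ with distinguished epimorphisms onto both) and projective amalgamation (distinguished $f\colon B\to A$, $g\colon C\to A$ admit $D$ and distinguished $h\colon D\to B$, $k\colon D\to C$ with $f\circ h=g\circ k$). A Fraïssé sequence is a sequence $(F_n)$ in the family with compatible distinguished epimorphisms $f^m_n\colon F_m\to F_n$ such that every member of the family is the image of some $F_n$ under a distinguished epimorphism, and for every distinguished $f\colon A\to F_m$ there exist $n\ge m$ and distinguished $g\colon F_n\to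 A$ with $f\circ g=f^n_m$; the projective Fraïssé limit is $\varprojlim F_n\subseteq\prod F_n$ with $\langle x,y\rangle$ an edge iff $\langle x_n,y_n\rangle$ is an edge for all $n$ (unique up to isomorphism). The family allows splitting edges if for every member $G$ and every nontrivial edge $\{a,b\}$, the graph obtained by replacing this edge by a path $a,\ast,b$ through a new vertex $\ast$ is in the family, and both maps collapsing $\ast$ to $a$, resp. to $b$ (identity elsewhere) are distinguished epimorphisms. Under these hypotheses the limit $\mathbb{G}$ is a prespace (its edge relation is an equivalence relation); its topological realization is the quotient map $\pi\colon\mathbb{G}\to|\mathbb{G}|=\mathbb{G}/E(\mathbb{G})$, and $|\mathbb{G}|$ is a dendrite (a compact metrizable connected locally connected space in which any two points are joined by a unique arc). A point $x$ of a dendrite $X$ is a ramification point if $X\setminus\{x\}$ has more than two connected components. *)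

theory Defs
  imports "HOL-Analysis.Analysis"
begin

text \<open>Vertices are natural numbers;
every finite graph is isomorphic to one of this form.\<close>

type_synonym fgraph = "nat set \<times> (nat \<times> nat) set"

definition verts :: "fgraph \<Rightarrow> nat set" where "verts G = fst G"
definition edges :: "fgraph \<Rightarrow> (nat \<times> nat) set" where "edges G = snd G"

definition fin_graph :: "fgraph \<Rightarrow> bool" where
  "fin_graph G \<longleftrightarrow> finite (verts G) \<and> edges G \<subseteq> verts G \<times> verts G
     \<and> (\<forall>v\<in>verts G. (v, v) \<in> edges G) \<and> (\<forall>a b. (a, b) \<in> edges G \<longrightarrow> (b, a) \<in> edges G)"

definition epi :: "fgraph \<Rightarrow> fgraph \<Rightarrow> (nat \<Rightarrow> nat) \<Rightarrow> bool" where
  "epi B A f \<longleftrightarrow> f ` verts B = verts A \<and>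
     (\<forall>a1 a2. (a1, a2) \<in> edges A \<longleftrightarrow>
        (\<exists>b1 b2. b1 \<in> verts B \<and> b2 \<in> verts B \<and> f b1 = a1 \<and> f b2 = a2 \<and> (b1, b2) \<in> edges B))"

text \<open>Connectedness of a subset S of a finite (discrete) graph: S cannot be split into two
nonempty disjoint (automatically closed) sets with no edges between them.\<close>
definition conn_set :: "fgraph \<Rightarrow> nat set \<Rightarrow> bool" where
  "conn_set G S \<longleftrightarrow> \<not> (\<exists>P Q. P \<noteq> {} \<and> Q \<noteq> {} \<and> P \<inter> Q = {} \<and> P \<union> Q = S \<and>
       (\<forall>p\<in>P. \<forall>q\<in>Q. (p, q) \<notin> edges G))"

definition monotone_epi :: "fgraph \<Rightarrow> fgraph \<Rightarrow> (nat \<Rightarrow> nat) \<Rightarrow> bool" where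
  "monotone_epi B A f \<longleftrightarrow> epi B A f \<and> (\<forall>a\<in>verts A. conn_set B {b\<in>verts B. f b = a})"

definition has_cycle :: "fgraph \<Rightarrow> bool" where
  "has_cycle G \<longleftrightarrow> (\<exists>vs. length vs \<ge> 3 \<and> distinct vs \<and> set vs \<subseteq> verts G \<and>
      (\<forall>i < length vs. (vs ! i, vs ! (Suc i mod length vs)) \<in> edges G))"

definition fin_tree :: "fgraph \<Rightarrow> bool" where
  "fin_tree G \<longleftrightarrow> fin_graph G \<and> verts G \<noteq> {} \<and> conn_set G (verts G) \<and> \<not> has_cycle G"

definition graph_iso :: "fgraph \<Rightarrow> fgraph \<Rightarrow> bool" where
  "graph_iso A B \<longleftrightarrow> (\<exists>h. bij_betw h (verts A) (verts B) \<and>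
      (\<forall>x\<in>verts A. \<forall>y\<in>verts A. (x, y) \<in> edges A \<longleftrightarrow> (h x, h y) \<in> edges B))"

text \<open>A family is a set \<F> of finite graphs together with a predicate D, where D B A f means
that f is a distinguished epimorphism from B onto A.\<close>
definition proj_fraisse_family ::
  "fgraph set \<Rightarrow> (fgraph \<Rightarrow> fgraph \<Rightarrow> (nat \<Rightarrow> nat) \<Rightarrow> bool) \<Rightarrow> bool" where
  "proj_fraisse_family \<F> D \<longleftrightarrow>
     (\<forall>G\<in>\<F>. fin_graph G) \<and>
     (\<forall>B A f. D B A f \<longrightarrow> B \<in> \<F> \<and> A \<in> \<F> \<and> epi B A f) \<and>
     (\<exists>C :: nat \<Rightarrow> fgraph. \<forall>G\<in>\<F>. \<exists>n. graph_iso G (C n)) \<and>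
     (\<forall>A\<in>\<F>. D A A id) \<and>
     (\<forall>A B C f g. D B A f \<longrightarrow> D C B g \<longrightarrow> D C A (f \<circ> g)) \<and>
     (\<forall>A\<in>\<F>. \<forall>B\<in>\<F>. \<exists>C\<in>\<F>. \<exists>f g. D C A f \<and> D C B g) \<and>
     (\<forall>A B C f g. D B A f \<longrightarrow> D C A g \<longrightarrow>
        (\<exists>E h k. D E B h \<and> D E C k \<and> (\<forall>x\<in>verts E. f (h x) = g (k x))))"

definition split_edge :: "fgraph \<Rightarrow> nat \<Rightarrow> nat \<Rightarrow> nat \<Rightarrow> fgraph" where
  "split_edge G a b v =
     (insert v (verts G),
      (edges G - {(a, b), (b, a)}) \<union> {(a, v), (v, a), (v, b), (b, v), (v, v)})"

definition collapse :: "nat \<Rightarrow> nat \<Rightarrow> nat \<Rightarrow> nat" where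
  "collapse v a x = (if x = v then a else x)"

definition allows_splitting_edges ::
  "fgraph set \<Rightarrow> (fgraph \<Rightarrow> fgraph \<Rightarrow> (nat \<Rightarrow> nat) \<Rightarrow> bool) \<Rightarrow> bool" where
  "allows_splitting_edges \<F> D \<longleftrightarrow>
     (\<forall>G\<in>\<F>. \<forall>a b. (a, b) \<in> edges G \<longrightarrow> a \<noteq> b \<longrightarrow>
        (\<exists>v. v \<notin> verts G \<and> split_edge G a b v \<in> \<F> \<and>
             D (split_edge G a b v) G (collapse v a) \<and>
             D (split_edge G a b v) G (collapse v b)))"

text \<open>Bonding maps: f n : F (n+1) \<rightarrow> F n; bond f m n : F m \<rightarrow> F n for n \<le> m.\<close>
fun bond :: "(nat \<Rightarrow> nat \<Rightarrow> nat) \<Rightarrow> nat \<Rightarrow> nat \<Rightarrow> nat \<Rightarrow> nat" where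
  "bond f 0 n = id"
| "bond f (Suc m) n = (if n \<le> m then bond f m n \<circ> f m else id)"

definition fraisse_sequence ::
  "fgraph set \<Rightarrow> (fgraph \<Rightarrow> fgraph \<Rightarrow> (nat \<Rightarrow> nat) \<Rightarrow> bool) \<Rightarrow>
   (nat \<Rightarrow> fgraph) \<Rightarrow> (nat \<Rightarrow> nat \<Rightarrow> nat) \<Rightarrow> bool" where
  "fraisse_sequence \<F> D F f \<longleftrightarrow>
     (\<forall>n. F n \<in> \<F> \<and> D (F (Suc n)) (F n) (f n)) \<and>
     (\<forall>A\<in>\<F>. \<exists>n g. D (F n) A g) \<and>
     (\<forall>A m h. D A (F m) h \<longrightarrow>
        (\<exists>n\<ge>m. \<exists>g. D (F n) A g \<and> (\<forall>x\<in>verts (F n). h (g x) = bond f n m x)))"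

definition lim_verts :: "(nat \<Rightarrow> fgraph) \<Rightarrow> (nat \<Rightarrow> nat \<Rightarrow> nat) \<Rightarrow> (nat \<Rightarrow> nat) set" where
  "lim_verts F f = {x. \<forall>n. x n \<in> verts (F n) \<and> f n (x (Suc n)) = x n}"

definition lim_edge :: "(nat \<Rightarrow> fgraph) \<Rightarrow> (nat \<Rightarrow> nat) \<Rightarrow> (nat \<Rightarrow> nat) \<Rightarrow> bool" where
  "lim_edge F x y \<longleftrightarrow> (\<forall>n. (x n, y n) \<in> edges (F n))"

definition lim_topology :: "(nat \<Rightarrow> fgraph) \<Rightarrow> (nat \<Rightarrow> nat \<Rightarrow> nat) \<Rightarrow> (nat \<Rightarrow> nat) topology" where
  "lim_topology F f =
     subtopology (product_topology (\<lambda>n. discrete_topology (verts (F n))) UNIV) (lim_verts F f)"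

text \<open>Topological realization: quotient map x \<mapsto> [x] onto the set of edge classes.\<close>
definition realization_map :: "(nat \<Rightarrow> fgraph) \<Rightarrow> (nat \<Rightarrow> nat \<Rightarrow> nat) \<Rightarrow> (nat \<Rightarrow> nat) \<Rightarrow> (nat \<Rightarrow> nat) set" where
  "realization_map F f x = {y \<in> lim_verts F f. lim_edge F x y}"

definition realization :: "(nat \<Rightarrow> fgraph) \<Rightarrow> (nat \<Rightarrow> nat \<Rightarrow> nat) \<Rightarrow> (nat \<Rightarrow> nat) set topology" where
  "realization F f = topology (\<lambda>U. U \<subseteq> realization_map F f ` lim_verts F f \<and>
      openin (lim_topology F f) {x \<in> lim_verts F f. realization_map F f x \<in> U})"

definition ramification_point :: "'a topology \<Rightarrow> 'a \<Rightarrow> bool" where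
  "ramification_point X p \<longleftrightarrow> p \<in> topspace X \<and>
     (let C = connected_components_of (subtopology X (topspace X - {p}))
      in infinite C \<or> card C > 2)"

end

theory Submission
  imports Defs "HOL-Library.Transitive_Closure_Table"
begin

text \<open>Splitting an edge of some F n by a new vertex and lifting the collapse of that vertex to
  a later level of the Fraisse sequence shows that no three distinct threads of the limit are
  chained by edges.  So the edge relation of the limit is an equivalence relation and every fibre
  of \<pi> has at most two points.  Suppose the fibre of p were {x, y} with x \<noteq> y.  For large n,
  x n y n is an edge of the tree F n, and removing it splits F n into two connected halves.
  Splitting that edge once more and pulling each half back along the lifted map gives connected
  sets at a higher level avoiding x and y, and the cylinders over them have connected images
  under \<pi> (the bonding maps are monotone, and Koenig's lemma glues the levels).  These two
  connected sets miss p and contain any prescribed finitely many other points, so the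
  complement of p has at most two components and p is not a ramification point.\<close>

section \<open>Finite graphs\<close>

lemma fin_graph_edge_verts: "fin_graph G \<Longrightarrow> (a, b) \<in> edges G \<Longrightarrow> a \<in> verts G \<and> b \<in> verts G"
  unfolding fin_graph_def by blast

lemma fin_graph_refl: "fin_graph G \<Longrightarrow> v \<in> verts G \<Longrightarrow> (v, v) \<in> edges G"
  unfolding fin_graph_def by blast

lemma fin_graph_sym: "fin_graph G \<Longrightarrow> (a, b) \<in> edges G \<Longrightarrow> (b, a) \<in> edges G"
  unfolding fin_graph_def by blast

lemma epi_image: "epi B A g \<Longrightarrow> g ` verts B = verts A"
  unfolding epi_def by blast

lemma epi_edge_iff:
  "epi B A g \<Longrightarrow> (a1, a2) \<in> edges A \<longleftrightarrow>
     (\<exists>b1 b2. b1 \<in> verts B \<and> b2 \<in> verts B \<and> g b1 = a1 \<and> g b2 = a2 \<and> (b1, b2) \<in> edges B)"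
  unfolding epi_def by blast

lemma epi_map_edge: "fin_graph B \<Longrightarrow> epi B A g \<Longrightarrow> (s, t) \<in> edges B \<Longrightarrow> (g s, g t) \<in> edges A"
  using epi_edge_iff fin_graph_edge_verts by blast

lemma epi_comp:
  assumes g: "epi B A g" and h: "epi C B h"
  shows "epi C A (g \<circ> h)"
  unfolding epi_def
proof (intro conjI allI)
  show "(g \<circ> h) ` verts C = verts A"
    by (simp only: image_comp[symmetric] epi_image[OF g] epi_image[OF h])
  have "\<forall>c\<in>verts C. h c \<in> verts B" using epi_image[OF h] by blast
  then show "(a1, a2) \<in> edges A \<longleftrightarrow> (\<exists>c1 c2. c1 \<in> verts C \<and> c2 \<in> verts C \<and>
      (g \<circ> h) c1 = a1 \<and> (g \<circ> h) c2 = a2 \<and> (c1, c2) \<in> edges C)" for a1 a2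
    by (simp add: epi_edge_iff[OF g] epi_edge_iff[OF h]) blast
qed

lemma conn_set_iff:
  "conn_set G S \<longleftrightarrow> (\<forall>P Q. S \<subseteq> P \<union> Q \<longrightarrow> P \<inter> Q = {} \<longrightarrow>
     (\<forall>p\<in>P. \<forall>q\<in>Q. (p, q) \<notin> edges G) \<longrightarrow> S \<subseteq> P \<or> S \<subseteq> Q)"
proof (intro iffI allI impI)
  fix P Q assume conn: "conn_set G S" and cover: "S \<subseteq> P \<union> Q" and "P \<inter> Q = {}"
    and no_edge: "\<forall>p\<in>P. \<forall>q\<in>Q. (p, q) \<notin> edges G"
  have "S \<inter> P = {} \<or> S \<inter> Q = {}"
  proof (rule ccontr)
    assume "\<not> ?thesis"
    then have "\<exists>P' Q'. P' \<noteq> {} \<and> Q' \<noteq> {} \<and> P' \<inter> Q' = {} \<and> P' \<union> Q' = S \<and>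
       (\<forall>p\<in>P'. \<forall>q\<in>Q'. (p, q) \<notin> edges G)"
      using cover \<open>P \<inter> Q = {}\<close> no_edge
      by (intro exI[of _ "S \<inter> P"] exI[of _ "S \<inter> Q"] conjI) auto
    with conn show False unfolding conn_set_def by (elim notE)
  qed
  then show "S \<subseteq> P \<or> S \<subseteq> Q" using cover by blast
next
  assume split: "\<forall>P Q. S \<subseteq> P \<union> Q \<longrightarrow> P \<inter> Q = {} \<longrightarrow>
     (\<forall>p\<in>P. \<forall>q\<in>Q. (p, q) \<notin> edges G) \<longrightarrow> S \<subseteq> P \<or> S \<subseteq> Q"
  show "conn_set G S"
    unfolding conn_set_def
  proof (rule notI, elim exE conjE)
    fix P Q assume "P \<noteq> {}" "Q \<noteq> {}" "P \<inter> Q = {}" "P \<union> Q = S"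
      "\<forall>p\<in>P. \<forall>q\<in>Q. (p, q) \<notin> edges G"
    with split[rule_format, of P Q] show False by blast
  qed
qed

lemma conn_set_singleton: "conn_set G {a}"
  unfolding conn_set_iff by blast

lemma conn_set_transfer:
  assumes conn: "conn_set G S"
    and edges: "\<And>s t. s \<in> S \<Longrightarrow> t \<in> S \<Longrightarrow> (s, t) \<in> edges G \<Longrightarrow> (s, t) \<in> edges H"
  shows "conn_set H S"
  unfolding conn_set_iff
proof (intro allI impI)
  fix P Q assume cover: "S \<subseteq> P \<union> Q" and disj: "P \<inter> Q = {}"
    and no_edge: "\<forall>p\<in>P. \<forall>q\<in>Q. (p, q) \<notin> edges H"
  have "S \<subseteq> P \<inter> S \<or> S \<subseteq> Q \<inter> S"
  proof (rule conn[unfolded conn_set_iff, rule_format])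
    show "S \<subseteq> P \<inter> S \<union> Q \<inter> S" using cover by blast
    show "P \<inter> S \<inter> (Q \<inter> S) = {}" using disj by blast
    show "(p, q) \<notin> edges G" if "p \<in> P \<inter> S" "q \<in> Q \<inter> S" for p q
      using that no_edge edges by blast
  qed
  then show "S \<subseteq> P \<or> S \<subseteq> Q" by blast
qed

text \<open>Each fibre is connected, so it lies on one side of a separation of the preimage; the
  images of the two sides would then separate T.\<close>
lemma conn_set_monotone_preimage:
  assumes mono: "monotone_epi B A g" and T: "T \<subseteq> verts A" and conn: "conn_set A T"
  shows "conn_set B {b \<in> verts B. g b \<in> T}"
  unfolding conn_set_iff
proof (intro allI impI)
  fix P Q assume cover: "{b \<in> verts B. g b \<in> T} \<subseteq> P \<union> Q" and disj: "P \<inter> Q = {}"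
    and no_edge: "\<forall>p\<in>P. \<forall>q\<in>Q. (p, q) \<notin> edges B"
  have epi: "epi B A g" and fibre_conn: "\<And>a. a \<in> verts A \<Longrightarrow> conn_set B {b \<in> verts B. g b = a}"
    using mono unfolding monotone_epi_def by auto
  have fibre_side: "{b \<in> verts B. g b = a} \<subseteq> P \<or> {b \<in> verts B. g b = a} \<subseteq> Q" if "a \<in> T" for a
  proof (rule fibre_conn[unfolded conn_set_iff, rule_format])
    show "a \<in> verts A" using that T by blast
    show "{b \<in> verts B. g b = a} \<subseteq> P \<union> Q" using that cover by blast
  qed (use disj no_edge in auto)
  let ?P = "{a \<in> T. {b \<in> verts B. g b = a} \<subseteq> P}" and ?Q = "{a \<in> T. {b \<in> verts B. g b = a} \<subseteq> Q}"
  have "T \<subseteq> ?P \<or> T \<subseteq> ?Q"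
  proof (rule conn[unfolded conn_set_iff, rule_format])
    show "T \<subseteq> ?P \<union> ?Q" using fibre_side by blast
    show "?P \<inter> ?Q = {}"
    proof (rule ccontr)
      assume "?P \<inter> ?Q \<noteq> {}"
      then obtain a where "a \<in> ?P" "a \<in> ?Q" by blast
      moreover obtain b where "b \<in> verts B" "g b = a"
        using epi_image[OF epi] T \<open>a \<in> ?P\<close> by (metis (no_types, lifting) imageE mem_Collect_eq subsetD)
      ultimately show False using disj by blast
    qed
    show "(p, q) \<notin> edges A" if "p \<in> ?P" "q \<in> ?Q" for p q
    proof
      assume "(p, q) \<in> edges A"
      then obtain b1 b2 where "b1 \<in> verts B" "b2 \<in> verts B" "g b1 = p" "g b2 = q" "(b1, b2) \<in> edges B"
        using epi_edge_iff[OF epi] by blast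
      with that no_edge show False by blast
    qed
  qed
  then show "{b \<in> verts B. g b \<in> T} \<subseteq> P \<or> {b \<in> verts B. g b \<in> T} \<subseteq> Q" by blast
qed

lemma monotone_epi_id:
  assumes "fin_graph G"
  shows "monotone_epi G G id"
proof -
  have "epi G G id"
    unfolding epi_def using fin_graph_edge_verts[OF assms] by auto
  moreover have "{b \<in> verts G. id b = a} = {a}" if "a \<in> verts G" for a
    using that by auto
  ultimately show ?thesis
    unfolding monotone_epi_def using conn_set_singleton by simp
qed

lemma monotone_epi_comp:
  assumes g: "monotone_epi B A g" and h: "monotone_epi C B h"
  shows "monotone_epi C A (g \<circ> h)"
  unfolding monotone_epi_def
proof (intro conjI ballI)
  show "epi C A (g \<circ> h)" using g h epi_comp unfolding monotone_epi_def by blast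
  fix a assume "a \<in> verts A"
  then have "conn_set B {b \<in> verts B. g b = a}" using g unfolding monotone_epi_def by blast
  then have "conn_set C {c \<in> verts C. h c \<in> {b \<in> verts B. g b = a}}"
    by (intro conn_set_monotone_preimage[OF h]) auto
  moreover have "h c \<in> verts B" if "c \<in> verts C" for c
    using h that epi_image unfolding monotone_epi_def by blast
  then have "{c \<in> verts C. (g \<circ> h) c = a} = {c \<in> verts C. h c \<in> {b \<in> verts B. g b = a}}"
    by auto
  ultimately show "conn_set C {c \<in> verts C. (g \<circ> h) c = a}" by simp
qed

lemma verts_split_edge: "verts (split_edge G a b v) = insert v (verts G)"
  by (simp add: split_edge_def verts_def)

lemma edges_split_edge: "edges (split_edge G a b v) =
    (edges G - {(a, b), (b, a)}) \<union> {(a, v), (v, a), (v, b), (b, v), (v, v)}"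
  by (simp add: split_edge_def edges_def)

section \<open>Finite trees\<close>

lemma conn_set_rtrancl_reachable:
  assumes G: "fin_graph G" and a: "a \<in> verts G" and R: "R \<subseteq> edges G"
  shows "conn_set G {t \<in> verts G. (a, t) \<in> R\<^sup>*}" (is "conn_set G ?S")
  unfolding conn_set_iff
proof (intro allI impI)
  have closed: "?S \<subseteq> X"
    if cover: "?S \<subseteq> X \<union> Y" and "X \<inter> Y = {}" and no_edge: "\<forall>x\<in>X. \<forall>y\<in>Y. (x, y) \<notin> edges G"
      and "a \<in> X" for X Y
  proof -
    have "(a, t) \<in> R\<^sup>* \<Longrightarrow> t \<in> X" for t
    proof (induction rule: rtrancl_induct)
      case (step c d)
      then have "(c, d) \<in> edges G" using R by blast
      then have "d \<in> ?S" using G step(1,2) fin_graph_edge_verts by (blast intro: rtrancl_into_rtrancl)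
      with cover no_edge \<open>X \<inter> Y = {}\<close> \<open>(c, d) \<in> edges G\<close> step.IH show ?case by blast
    qed (fact \<open>a \<in> X\<close>)
    then show ?thesis by blast
  qed
  fix P Q assume cover: "?S \<subseteq> P \<union> Q" and disj: "P \<inter> Q = {}"
    and no_edge: "\<forall>p\<in>P. \<forall>q\<in>Q. (p, q) \<notin> edges G"
  then have no_edge': "\<forall>q\<in>Q. \<forall>p\<in>P. (q, p) \<notin> edges G" using fin_graph_sym[OF G] by blast
  have "a \<in> P \<or> a \<in> Q" using a cover by blast
  then show "?S \<subseteq> P \<or> ?S \<subseteq> Q"
  proof
    assume "a \<in> P"
    with closed[OF cover disj no_edge] show ?thesis by blast
  next
    assume "a \<in> Q"
    with closed[of Q P] cover disj no_edge' show ?thesis by blast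
  qed
qed

lemma conn_set_imp_rtrancl:
  assumes conn: "conn_set G (verts G)" and a: "a \<in> verts G" and t: "t \<in> verts G"
  shows "(a, t) \<in> (edges G)\<^sup>*"
proof -
  let ?P = "{s \<in> verts G. (a, s) \<in> (edges G)\<^sup>*}"
  have "verts G \<subseteq> ?P \<or> verts G \<subseteq> verts G - ?P"
  proof (rule conn[unfolded conn_set_iff, rule_format])
    show "(p, q) \<notin> edges G" if "p \<in> ?P" "q \<in> verts G - ?P" for p q
      using that rtrancl_into_rtrancl[of a p "edges G" q] by blast
  qed auto
  with a t show ?thesis by auto
qed

lemma rtrancl_path_nth: "rtrancl_path r x xs y \<Longrightarrow> i < length xs \<Longrightarrow> r ((x # xs) ! i) (xs ! i)"
  by (induction arbitrary: i rule: rtrancl_path.induct) (auto simp: nth_Cons split: nat.split)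

lemma rtrancl_path_last: "rtrancl_path r x xs y \<Longrightarrow> last (x # xs) = y"
  by (induction rule: rtrancl_path.induct) auto

text \<open>A path from a to b avoiding the edge {a, b} would close a cycle.\<close>
lemma fin_tree_no_bypass:
  assumes tree: "fin_tree G" and ab: "(a, b) \<in> edges G" "a \<noteq> b"
  shows "(a, b) \<notin> (edges G - {(a, b), (b, a)})\<^sup>*"
proof
  let ?R = "edges G - {(a, b), (b, a)}"
  let ?r = "\<lambda>x y. (x, y) \<in> ?R \<and> x \<noteq> y"
  have G: "fin_graph G" and acyclic: "\<not> has_cycle G" using tree unfolding fin_tree_def by auto
  assume "(a, b) \<in> ?R\<^sup>*"
  then have "(a, b) \<in> (?R - Id)\<^sup>*" by (simp add: rtrancl_r_diff_Id)
  moreover have "{(x, y). ?r x y} = ?R - Id" by auto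
  ultimately have "?r\<^sup>*\<^sup>* a b" by (simp only: rtranclp_rtrancl_eq)
  then obtain xs where "rtrancl_path ?r a xs b" by (auto simp: rtranclp_eq_rtrancl_path)
  then obtain xs where path: "rtrancl_path ?r a xs b" and dist: "distinct (a # xs)"
    by (rule rtrancl_path_distinct)
  let ?vs = "a # xs"
  have last: "?vs ! length xs = b"
    using rtrancl_path_last[OF path] last_conv_nth[of ?vs] by simp
  have step: "(?vs ! i, ?vs ! Suc i) \<in> edges G" if "i < length xs" for i
    using rtrancl_path_nth[OF path that] by simp
  have "length xs \<noteq> 0" using last ab(2) by auto
  moreover have "length xs \<noteq> 1" using rtrancl_path_nth[OF path, of 0] last by fastforce
  ultimately have long: "3 \<le> length ?vs" by (simp only: length_Cons)
  have "has_cycle G"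
    unfolding has_cycle_def
  proof (intro exI conjI allI impI)
    show "3 \<le> length ?vs" "distinct ?vs" by (fact long, fact dist)
    have "xs ! j \<in> verts G" if "j < length xs" for j
      using step[OF that] fin_graph_edge_verts[OF G] by auto
    then show "set ?vs \<subseteq> verts G"
      using fin_graph_edge_verts[OF G ab(1)] by (auto simp: in_set_conv_nth)
    fix i assume "i < length ?vs"
    then consider "i < length xs" | "i = length xs" by fastforce
    then show "(?vs ! i, ?vs ! (Suc i mod length ?vs)) \<in> edges G"
    proof cases
      case 1
      then show ?thesis using step by simp
    next
      case 2
      then show ?thesis using last fin_graph_sym[OF G ab(1)] by simp
    qed
  qed
  with acyclic show False by contradiction
qed

definition edge_side :: "fgraph \<Rightarrow> nat \<Rightarrow> nat \<Rightarrow> nat set" where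
  "edge_side G a b = {t \<in> verts G. (a, t) \<in> (edges G - {(a, b), (b, a)})\<^sup>*}"

lemma edge_side_subset: "edge_side G a b \<subseteq> verts G"
  unfolding edge_side_def by blast

lemma conn_set_edge_side: "fin_graph G \<Longrightarrow> a \<in> verts G \<Longrightarrow> conn_set G (edge_side G a b)"
  unfolding edge_side_def by (rule conn_set_rtrancl_reachable) auto

lemma edge_side_not_mem:
  "fin_tree G \<Longrightarrow> (a, b) \<in> edges G \<Longrightarrow> a \<noteq> b \<Longrightarrow> b \<notin> edge_side G a b"
  unfolding edge_side_def using fin_tree_no_bypass by blast

lemma edge_side_Un:
  assumes tree: "fin_tree G" and ab: "(a, b) \<in> edges G"
  shows "edge_side G a b \<union> edge_side G b a = verts G"
proof
  let ?R = "edges G - {(a, b), (b, a)}"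
  have G: "fin_graph G" and conn: "conn_set G (verts G)" using tree unfolding fin_tree_def by auto
  have a: "a \<in> verts G" using fin_graph_edge_verts[OF G ab] by blast
  show "verts G \<subseteq> edge_side G a b \<union> edge_side G b a"
  proof
    fix t assume t: "t \<in> verts G"
    have "(a, t) \<in> (edges G)\<^sup>*" using conn_set_imp_rtrancl[OF conn a t] .
    then have "(a, t) \<in> ?R\<^sup>* \<or> (b, t) \<in> ?R\<^sup>*"
    proof (induction rule: rtrancl_induct)
      case (step c d)
      show ?case
      proof (cases "(c, d) \<in> ?R")
        case True
        with step.IH show ?thesis by (meson rtrancl.rtrancl_into_rtrancl)
      next
        case False
        with step.hyps(2) have "d = a \<or> d = b" by blast
        then show ?thesis by auto
      qed
    qed simp
    with t show "t \<in> edge_side G a b \<union> edge_side G b a"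
      unfolding edge_side_def by (auto simp: insert_commute)
  qed
qed (simp add: edge_side_subset)

section \<open>Inverse limits and their topological realization\<close>

lemma lim_verts_level: "x \<in> lim_verts F f \<Longrightarrow> x n \<in> verts (F n)"
  unfolding lim_verts_def by auto

lemma bond_self: "bond f m m = id"
  by (cases m) auto

lemma bond_Suc_right: "n < m \<Longrightarrow> bond f m n = f n \<circ> bond f m (Suc n)"
proof (induction m)
  case (Suc m)
  then show ?case by (cases "n = m") (auto simp: bond_self)
qed simp

lemma lim_verts_bond: "x \<in> lim_verts F f \<Longrightarrow> n \<le> m \<Longrightarrow> bond f m n (x m) = x n"
proof (induction m)
  case (Suc m)
  then show ?case by (cases "n = Suc m") (auto simp: lim_verts_def bond_self)
qed simp

lemma lim_verts_eq_below:
  "x \<in> lim_verts F f \<Longrightarrow> z \<in> lim_verts F f \<Longrightarrow> x m = z m \<Longrightarrow> n \<le> m \<Longrightarrow> x n = z n"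
  by (metis lim_verts_bond)

lemma lim_verts_eventually_neq:
  assumes "x \<in> lim_verts F f" "z \<in> lim_verts F f" "x \<noteq> z"
  shows "eventually (\<lambda>n. x n \<noteq> z n) sequentially"
proof -
  obtain n0 where "x n0 \<noteq> z n0" using assms(3) by blast
  then show ?thesis
    unfolding eventually_sequentially using lim_verts_eq_below[OF assms(1,2)] by blast
qed

lemma lim_verts_inj_level:
  assumes S: "finite S" "S \<subseteq> lim_verts F f"
  obtains n where "inj_on (\<lambda>z. z n) S"
proof -
  have ev: "eventually (\<lambda>n. z = z' \<or> z n \<noteq> z' n) sequentially" if "z \<in> S" "z' \<in> S" for z z'
  proof (cases "z = z'")
    case False
    with that S(2) have "eventually (\<lambda>n. z n \<noteq> z' n) sequentially"
      by (intro lim_verts_eventually_neq) auto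
    then show ?thesis by (rule eventually_mono) simp
  qed simp
  have "eventually (\<lambda>n. \<forall>z\<in>S. \<forall>z'\<in>S. z = z' \<or> z n \<noteq> z' n) sequentially"
    by (intro eventually_ball_finite[OF S(1)] ballI ev)
  then have "\<exists>n. \<forall>z\<in>S. \<forall>z'\<in>S. z = z' \<or> z n \<noteq> z' n"
    by (rule eventually_happens'[OF sequentially_bot])
  then show thesis using that unfolding inj_on_def by blast
qed

definition lim_cylinder :: "(nat \<Rightarrow> fgraph) \<Rightarrow> (nat \<Rightarrow> nat \<Rightarrow> nat) \<Rightarrow> nat \<Rightarrow> nat set \<Rightarrow> (nat \<Rightarrow> nat) set"
  where "lim_cylinder F f m T = {z \<in> lim_verts F f. z m \<in> T}"

lemma topspace_lim_topology: "topspace (lim_topology F f) = lim_verts F f"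
  unfolding lim_topology_def lim_verts_def by (auto simp: PiE_iff)

lemma openin_lim_topology_level:
  assumes W: "openin (lim_topology F f) W" and w: "w \<in> W"
  shows "\<exists>k. \<forall>u\<in>lim_verts F f. u k = w k \<longrightarrow> u \<in> W"
proof -
  obtain S where S: "openin (product_topology (\<lambda>n. discrete_topology (verts (F n))) UNIV) S"
      and W_eq: "W = S \<inter> lim_verts F f"
    using W unfolding lim_topology_def openin_subtopology by blast
  then obtain U where fin: "finite {i. U i \<noteq> verts (F i)}"
      and "w \<in> Pi\<^sub>E UNIV U" and U_S: "Pi\<^sub>E UNIV U \<subseteq> S"
    using w unfolding openin_product_topology_alt by auto
  define k where "k = Max (insert 0 {i. U i \<noteq> verts (F i)})"
  have "u \<in> W" if u: "u \<in> lim_verts F f" "u k = w k" for u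
  proof -
    have "u i \<in> U i" for i
    proof (cases "U i = verts (F i)")
      case False
      then have "i \<le> k" unfolding k_def using fin by simp
      then have "u i = w i" using lim_verts_eq_below u W_eq w by blast
      then show ?thesis using \<open>w \<in> Pi\<^sub>E UNIV U\<close> by auto
    qed (use u in \<open>auto simp: lim_verts_def\<close>)
    then show ?thesis using U_S W_eq u(1) by (auto simp: PiE_iff)
  qed
  then show ?thesis by blast
qed

lemma openin_lim_topology_adherent:
  assumes "openin (lim_topology F f) W" "a \<in> W" "Z \<subseteq> lim_verts F f" "\<And>k. \<exists>z\<in>Z. z k = a k"
  shows "Z \<inter> W \<noteq> {}"
  using openin_lim_topology_level[OF assms(1,2)] assms(3,4) by blast

lemma openin_realization:
  "openin (realization F f) U \<longleftrightarrow> U \<subseteq> realization_map F f ` lim_verts F f \<and>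
     openin (lim_topology F f) {x \<in> lim_verts F f. realization_map F f x \<in> U}"
proof -
  define L where "L U \<longleftrightarrow> U \<subseteq> realization_map F f ` lim_verts F f \<and>
     openin (lim_topology F f) {x \<in> lim_verts F f. realization_map F f x \<in> U}" for U
  have Int: "{x \<in> lim_verts F f. realization_map F f x \<in> S \<inter> T} =
      {x \<in> lim_verts F f. realization_map F f x \<in> S} \<inter> {x \<in> lim_verts F f. realization_map F f x \<in> T}"
    for S T by blast
  have Union: "{x \<in> lim_verts F f. realization_map F f x \<in> \<Union>K} =
      (\<Union>U\<in>K. {x \<in> lim_verts F f. realization_map F f x \<in> U})" for K
    by blast
  have "istopology L"
    unfolding istopology_def L_def Int Union by (auto intro: openin_Int openin_Union)
  then show ?thesis unfolding realization_def L_def[symmetric] by simp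
qed

lemma topspace_realization: "topspace (realization F f) = realization_map F f ` lim_verts F f"
proof
  show "topspace (realization F f) \<subseteq> realization_map F f ` lim_verts F f"
    using openin_realization openin_topspace by blast
  have "{x \<in> lim_verts F f. realization_map F f x \<in> realization_map F f ` lim_verts F f} =
      topspace (lim_topology F f)"
    by (auto simp: topspace_lim_topology)
  then have "openin (realization F f) (realization_map F f ` lim_verts F f)"
    unfolding openin_realization by simp
  then show "realization_map F f ` lim_verts F f \<subseteq> topspace (realization F f)"
    by (rule openin_subset)
qed

lemma realization_open_adherent:
  assumes E: "openin (realization F f) E" and x: "x \<in> lim_verts F f" "realization_map F f x \<in> E"
    and Z: "Z \<subseteq> lim_verts F f" "\<And>k. \<exists>z\<in>Z. z k = x k"
  shows "\<exists>z\<in>Z. realization_map F f z \<in> E"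
proof -
  let ?W = "{y \<in> lim_verts F f. realization_map F f y \<in> E}"
  have "openin (lim_topology F f) ?W" using E unfolding openin_realization by blast
  moreover have "x \<in> ?W" using x by blast
  ultimately have "Z \<inter> ?W \<noteq> {}" using openin_lim_topology_adherent Z by blast
  then show ?thesis by blast
qed

section \<open>Monotone inverse sequences\<close>

lemma pigeonhole_antimono:
  fixes Q :: "'a \<Rightarrow> nat \<Rightarrow> bool"
  assumes L: "finite L" and ex: "\<And>k. \<exists>l\<in>L. Q l k"
    and antimono: "\<And>l k k'. Q l k' \<Longrightarrow> k \<le> k' \<Longrightarrow> Q l k"
  shows "\<exists>l\<in>L. \<forall>k. Q l k"
proof (rule ccontr)
  assume "\<not> ?thesis"
  then obtain kk where kk: "\<And>l. l \<in> L \<Longrightarrow> \<not> Q l (kk l)" by metis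
  obtain l where "l \<in> L" "Q l (Max (kk ` L))" using ex by blast
  moreover have "kk l \<le> Max (kk ` L)" using L \<open>l \<in> L\<close> by simp
  ultimately show False using kk antimono by blast
qed

locale monotone_inverse_sequence =
  fixes F :: "nat \<Rightarrow> fgraph" and f :: "nat \<Rightarrow> nat \<Rightarrow> nat"
  assumes fin_graph_F: "fin_graph (F n)"
    and monotone_step: "monotone_epi (F (Suc n)) (F n) (f n)"
begin

lemma monotone_epi_bond: "n \<le> m \<Longrightarrow> monotone_epi (F m) (F n) (bond f m n)"
proof (induction m)
  case 0
  then show ?case using monotone_epi_id[OF fin_graph_F] by (simp add: id_def)
next
  case (Suc m)
  show ?case
  proof (cases "n \<le> m")
    case True
    then show ?thesis using monotone_epi_comp[OF Suc.IH monotone_step] by (simp add: comp_def)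
  next
    case False
    with Suc.prems have "n = Suc m" by simp
    then show ?thesis using monotone_epi_id[OF fin_graph_F] bond_self by metis
  qed
qed

lemma epi_bond: "n \<le> m \<Longrightarrow> epi (F m) (F n) (bond f m n)"
  using monotone_epi_bond unfolding monotone_epi_def by blast

lemma lim_verts_level_surj:
  assumes t: "t \<in> verts (F k)"
  shows "\<exists>w\<in>lim_verts F f. w k = t"
proof -
  have lift: "\<exists>s'. s' \<in> verts (F (Suc j)) \<and> f j s' = s" if "s \<in> verts (F j)" for s j
    using epi_image[OF epi_bond[of j "Suc j"]] that by (force simp: bond_self)
  have "\<exists>u. \<forall>i. (u i \<in> verts (F (k + i)) \<and> (i = 0 \<longrightarrow> u i = t)) \<and> f (k + i) (u (Suc i)) = u i"
    by (rule dependent_nat_choice) (use t lift in auto)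
  then obtain u where u: "\<And>i. u i \<in> verts (F (k + i))" "\<And>i. f (k + i) (u (Suc i)) = u i"
    and "u 0 = t"
    by blast
  define w where "w j = (if j \<le> k then bond f k j t else u (j - k))" for j
  have "w \<in> lim_verts F f"
    unfolding lim_verts_def
  proof (intro CollectI allI conjI)
    fix j
    show "w j \<in> verts (F j)"
    proof (cases "j \<le> k")
      case True
      then show ?thesis using epi_image[OF epi_bond[OF True]] t unfolding w_def by auto
    next
      case False
      then show ?thesis using u(1)[of "j - k"] unfolding w_def by simp
    qed
    show "f j (w (Suc j)) = w j"
    proof (cases "j < k")
      case True
      then show ?thesis unfolding w_def by (simp add: bond_Suc_right)
    next
      case False
      then show ?thesis
        using u(2)[of "j - k"] \<open>u 0 = t\<close> unfolding w_def by (auto simp: bond_self Suc_diff_le)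
    qed
  qed
  moreover have "w k = t" unfolding w_def by (simp add: bond_self)
  ultimately show ?thesis by blast
qed

lemma lim_edge_refl: "x \<in> lim_verts F f \<Longrightarrow> lim_edge F x x"
  unfolding lim_edge_def lim_verts_def using fin_graph_refl[OF fin_graph_F] by blast

lemma lim_edge_sym: "lim_edge F x y \<Longrightarrow> lim_edge F y x"
  unfolding lim_edge_def using fin_graph_sym[OF fin_graph_F] by blast

lemma lim_edge_level_below:
  assumes "x \<in> lim_verts F f" "y \<in> lim_verts F f" "(x m, y m) \<in> edges (F m)" "n \<le> m"
  shows "(x n, y n) \<in> edges (F n)"
  using epi_map_edge[OF fin_graph_F epi_bond[OF assms(4)] assms(3)]
  by (simp add: lim_verts_bond[OF assms(1,4)] lim_verts_bond[OF assms(2,4)])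

lemma level_pair_persistent:
  assumes Z: "Z1 \<subseteq> lim_verts F f" "Z2 \<subseteq> lim_verts F f"
    and edge: "\<And>k'. \<exists>z1\<in>Z1. \<exists>z2\<in>Z2. (z1 k', z2 k') \<in> edges (F k')"
  shows "\<exists>c. \<forall>k'. \<exists>z1\<in>Z1. \<exists>z2\<in>Z2. (z1 k, z2 k) = c \<and> (z1 k', z2 k') \<in> edges (F k')"
proof -
  have "\<exists>c\<in>verts (F k) \<times> verts (F k).
      \<forall>k'. \<exists>z1\<in>Z1. \<exists>z2\<in>Z2. (z1 k, z2 k) = c \<and> (z1 k', z2 k') \<in> edges (F k')"
  proof (rule pigeonhole_antimono)
    show "finite (verts (F k) \<times> verts (F k))"
      using fin_graph_F[of k] unfolding fin_graph_def by simp
    show "\<exists>c\<in>verts (F k) \<times> verts (F k). \<exists>z1\<in>Z1. \<exists>z2\<in>Z2.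
        (z1 k, z2 k) = c \<and> (z1 k', z2 k') \<in> edges (F k')" for k'
      using edge[of k'] Z unfolding lim_verts_def by blast
    show "\<exists>z1\<in>Z1. \<exists>z2\<in>Z2. (z1 k, z2 k) = c \<and> (z1 k', z2 k') \<in> edges (F k')"
      if "\<exists>z1\<in>Z1. \<exists>z2\<in>Z2. (z1 k, z2 k) = c \<and> (z1 k'', z2 k'') \<in> edges (F k'')" "k' \<le> k''"
      for c k' k''
      using that Z lim_edge_level_below by blast
  qed
  then show ?thesis by blast
qed

lemma level_pair_refine:
  assumes Z: "Z1 \<subseteq> lim_verts F f" "Z2 \<subseteq> lim_verts F f"
    and c: "\<And>k'. \<exists>z1\<in>Z1. \<exists>z2\<in>Z2. (z1 k, z2 k) = c \<and> (z1 k', z2 k') \<in> edges (F k')"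
  obtains c' where "\<And>k'. \<exists>z1\<in>Z1. \<exists>z2\<in>Z2. (z1 (Suc k), z2 (Suc k)) = c' \<and> (z1 k', z2 k') \<in> edges (F k')"
    "f k (fst c') = fst c" "f k (snd c') = snd c"
proof -
  let ?Z1 = "{z \<in> Z1. z k = fst c}" and ?Z2 = "{z \<in> Z2. z k = snd c}"
  have "\<exists>z1\<in>?Z1. \<exists>z2\<in>?Z2. (z1 k', z2 k') \<in> edges (F k')" for k'
    using c[of k'] by fastforce
  then obtain c' where c': "\<And>k'. \<exists>z1\<in>?Z1. \<exists>z2\<in>?Z2. (z1 (Suc k), z2 (Suc k)) = c' \<and>
      (z1 k', z2 k') \<in> edges (F k')"
    using level_pair_persistent[of ?Z1 ?Z2] Z by blast
  obtain z1 z2 where z: "z1 \<in> ?Z1" "z2 \<in> ?Z2" "(z1 (Suc k), z2 (Suc k)) = c'"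
    using c' by blast
  have "f k (z1 (Suc k)) = z1 k" "f k (z2 (Suc k)) = z2 k"
    using z(1,2) Z unfolding lim_verts_def by auto
  with z have "f k (fst c') = fst c" "f k (snd c') = snd c" by auto
  moreover have "\<exists>z1\<in>Z1. \<exists>z2\<in>Z2. (z1 (Suc k), z2 (Suc k)) = c' \<and> (z1 k', z2 k') \<in> edges (F k')"
    for k'
    using c'[of k'] by blast
  ultimately show thesis using that by blast
qed

text \<open>Koenig's lemma, for the finitely branching tree of pairs of vertices of the levels.\<close>
lemma lim_edge_accumulation:
  assumes Z: "Z1 \<subseteq> lim_verts F f" "Z2 \<subseteq> lim_verts F f"
    and edge: "\<And>k. \<exists>z1\<in>Z1. \<exists>z2\<in>Z2. (z1 k, z2 k) \<in> edges (F k)"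
  obtains a b where "a \<in> lim_verts F f" "b \<in> lim_verts F f" "lim_edge F a b"
    "\<And>k. \<exists>z1\<in>Z1. z1 k = a k" "\<And>k. \<exists>z2\<in>Z2. z2 k = b k"
proof -
  define good where "good k c \<longleftrightarrow>
    (\<forall>k'. \<exists>z1\<in>Z1. \<exists>z2\<in>Z2. (z1 k, z2 k) = c \<and> (z1 k', z2 k') \<in> edges (F k'))" for k c
  have "\<exists>c. good 0 c" unfolding good_def using level_pair_persistent[OF Z edge] .
  moreover have "\<exists>c'. good (Suc k) c' \<and> f k (fst c') = fst c \<and> f k (snd c') = snd c"
    if "good k c" for k c
    using level_pair_refine[OF Z, of k c] that unfolding good_def by metis
  ultimately obtain c where c: "\<And>k. good k (c k)"
    "\<And>k. f k (fst (c (Suc k))) = fst (c k) \<and> f k (snd (c (Suc k))) = snd (c k)"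
    using dependent_nat_choice[of good "\<lambda>k c c'. f k (fst c') = fst c \<and> f k (snd c') = snd c"]
    by blast
  have level: "\<exists>z1\<in>Z1. \<exists>z2\<in>Z2. (z1 k, z2 k) = c k \<and> c k \<in> edges (F k)" for k
    using c(1)[of k] unfolding good_def by metis
  have "fst (c k) \<in> verts (F k) \<and> snd (c k) \<in> verts (F k)" for k
  proof -
    obtain z1 z2 where "z1 \<in> Z1" "z2 \<in> Z2" "(z1 k, z2 k) = c k"
      using level by blast
    then show ?thesis using Z lim_verts_level by (metis fst_conv snd_conv subsetD)
  qed
  then have "(\<lambda>k. fst (c k)) \<in> lim_verts F f" "(\<lambda>k. snd (c k)) \<in> lim_verts F f"
    using c(2) unfolding lim_verts_def by auto
  moreover have "lim_edge F (\<lambda>k. fst (c k)) (\<lambda>k. snd (c k))"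
    using level unfolding lim_edge_def by simp
  moreover have "\<exists>z1\<in>Z1. z1 k = fst (c k)" "\<exists>z2\<in>Z2. z2 k = snd (c k)" for k
    using level[of k] by (metis fst_conv snd_conv)+
  ultimately show thesis by (rule that)
qed

lemma lim_cylinder_level_image:
  assumes "m \<le> k"
  shows "(\<lambda>z. z k) ` lim_cylinder F f m T = {t \<in> verts (F k). bond f k m t \<in> T}"
proof
  show "(\<lambda>z. z k) ` lim_cylinder F f m T \<subseteq> {t \<in> verts (F k). bond f k m t \<in> T}"
    using lim_verts_level lim_verts_bond[OF _ assms] unfolding lim_cylinder_def by auto
  show "{t \<in> verts (F k). bond f k m t \<in> T} \<subseteq> (\<lambda>z. z k) ` lim_cylinder F f m T"
  proof
    fix t assume t: "t \<in> {t \<in> verts (F k). bond f k m t \<in> T}"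
    then obtain w where "w \<in> lim_verts F f" "w k = t"
      using lim_verts_level_surj by blast
    with t have "w \<in> lim_cylinder F f m T"
      unfolding lim_cylinder_def using lim_verts_bond[OF _ assms] by auto
    with \<open>w k = t\<close> show "t \<in> (\<lambda>z. z k) ` lim_cylinder F f m T" by blast
  qed
qed

lemma lim_cylinder_level_edge:
  assumes T: "T \<subseteq> verts (F m)" "conn_set (F m) T"
    and split: "Z1 \<union> Z2 = lim_cylinder F f m T" "Z1 \<noteq> {}" "Z2 \<noteq> {}"
  shows "\<exists>z1\<in>Z1. \<exists>z2\<in>Z2. (z1 k, z2 k) \<in> edges (F k)"
proof -
  define k' where "k' = max k m"
  have "m \<le> k'" "k \<le> k'" unfolding k'_def by auto
  have Z: "Z1 \<subseteq> lim_verts F f" "Z2 \<subseteq> lim_verts F f"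
    using split(1) unfolding lim_cylinder_def by auto
  have S_eq: "{t \<in> verts (F k'). bond f k' m t \<in> T} = (\<lambda>z. z k') ` Z1 \<union> (\<lambda>z. z k') ` Z2"
    by (simp only: lim_cylinder_level_image[OF \<open>m \<le> k'\<close>, of T, symmetric] split(1)[symmetric]
        image_Un)
  have conn: "conn_set (F k') {t \<in> verts (F k'). bond f k' m t \<in> T}"
    using conn_set_monotone_preimage[OF monotone_epi_bond[OF \<open>m \<le> k'\<close>] T] .
  have "\<exists>z1\<in>Z1. \<exists>z2\<in>Z2. (z1 k', z2 k') \<in> edges (F k')"
  proof (rule ccontr)
    assume no_edge: "\<not> ?thesis"
    then have disj: "(\<lambda>z. z k') ` Z1 \<inter> (\<lambda>z. z k') ` Z2 = {}"
      using Z fin_graph_refl[OF fin_graph_F] unfolding lim_verts_def by fastforce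
    have "(\<lambda>z. z k') ` Z1 \<union> (\<lambda>z. z k') ` Z2 \<subseteq> (\<lambda>z. z k') ` Z1 \<or>
        (\<lambda>z. z k') ` Z1 \<union> (\<lambda>z. z k') ` Z2 \<subseteq> (\<lambda>z. z k') ` Z2"
      using conn[unfolded conn_set_iff S_eq, rule_format, OF _ disj] no_edge by blast
    then show False using disj split(2,3) by blast
  qed
  then show ?thesis using Z lim_edge_level_below[OF _ _ _ \<open>k \<le> k'\<close>] by blast
qed

text \<open>A separation of the image splits the cylinder into two parts which, by connectedness of
  T, are adjacent at every level; Koenig's lemma yields adjacent threads a, b adherent to the two
  parts, and \<pi> a = \<pi> b then lies in both open sets.\<close>
lemma connectedin_realization_cylinder:
  assumes collapse: "\<And>a b. a \<in> lim_verts F f \<Longrightarrow> b \<in> lim_verts F f \<Longrightarrow> lim_edge F a b \<Longrightarrow>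
      realization_map F f a = realization_map F f b"
    and T: "T \<subseteq> verts (F m)" "conn_set (F m) T"
  shows "connectedin (realization F f) (realization_map F f ` lim_cylinder F f m T)"
  unfolding connectedin
proof (intro conjI notI)
  let ?\<pi> = "realization_map F f" and ?Z = "lim_cylinder F f m T"
  have Z: "?Z \<subseteq> lim_verts F f" unfolding lim_cylinder_def by blast
  then show "?\<pi> ` ?Z \<subseteq> topspace (realization F f)"
    using topspace_realization by auto
  assume "\<exists>E1 E2. openin (realization F f) E1 \<and> openin (realization F f) E2 \<and>
      ?\<pi> ` ?Z \<subseteq> E1 \<union> E2 \<and> E1 \<inter> E2 \<inter> ?\<pi> ` ?Z = {} \<and> E1 \<inter> ?\<pi> ` ?Z \<noteq> {} \<and> E2 \<inter> ?\<pi> ` ?Z \<noteq> {}"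
  then obtain E1 E2 where E: "openin (realization F f) E1" "openin (realization F f) E2"
      "?\<pi> ` ?Z \<subseteq> E1 \<union> E2" "E1 \<inter> E2 \<inter> ?\<pi> ` ?Z = {}"
      "E1 \<inter> ?\<pi> ` ?Z \<noteq> {}" "E2 \<inter> ?\<pi> ` ?Z \<noteq> {}"
    by blast
  define Z1 where "Z1 = {z \<in> ?Z. ?\<pi> z \<in> E1}"
  define Z2 where "Z2 = {z \<in> ?Z. ?\<pi> z \<in> E2}"
  have Z12: "Z1 \<subseteq> lim_verts F f" "Z2 \<subseteq> lim_verts F f"
    using Z unfolding Z1_def Z2_def by auto
  have "Z1 \<union> Z2 = ?Z" "Z1 \<noteq> {}" "Z2 \<noteq> {}"
    using E(3,5,6) unfolding Z1_def Z2_def by auto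
  then have "\<And>k. \<exists>z1\<in>Z1. \<exists>z2\<in>Z2. (z1 k, z2 k) \<in> edges (F k)"
    using lim_cylinder_level_edge[OF T] by blast
  then obtain a b where ab: "a \<in> lim_verts F f" "b \<in> lim_verts F f" "lim_edge F a b"
      and approx: "\<And>k. \<exists>z1\<in>Z1. z1 k = a k" "\<And>k. \<exists>z2\<in>Z2. z2 k = b k"
    using lim_edge_accumulation[OF Z12] by blast
  have "a \<in> ?Z" "b \<in> ?Z"
    using ab(1,2) approx[of m] unfolding Z1_def Z2_def lim_cylinder_def by auto
  then have "?\<pi> a \<in> E1 \<union> E2" "?\<pi> b \<in> E1 \<union> E2" using E(3) by blast+
  moreover have "?\<pi> a \<notin> E2"
    using realization_open_adherent[OF E(2) ab(1) _ Z12(1) approx(1)] E(4)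
    unfolding Z1_def by blast
  moreover have "?\<pi> b \<notin> E1"
    using realization_open_adherent[OF E(1) ab(2) _ Z12(2) approx(2)] E(4)
    unfolding Z2_def by blast
  moreover have "?\<pi> a = ?\<pi> b" using collapse[OF ab] .
  ultimately show False by simp
qed

end

section \<open>Fraisse limits of trees\<close>

lemma three_distinct_elements:
  assumes "infinite C \<or> 2 < card C"
  obtains a b c where "a \<in> C" "b \<in> C" "c \<in> C" "a \<noteq> b" "a \<noteq> c" "b \<noteq> c"
proof -
  obtain B where "B \<subseteq> C" "card B = 3"
    using assms infinite_arbitrarily_large obtain_subset_with_card_n
    by (metis Suc_leI numeral_2_eq_2 numeral_3_eq_3)
  then show thesis using that unfolding card_3_iff by blast
qed

lemma connected_components_of_eqI:
  assumes "C \<in> connected_components_of X" "C' \<in> connected_components_of X" "connectedin X K"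
    and "a \<in> C \<inter> K" "b \<in> C' \<inter> K"
  shows "C = C'"
proof -
  have "K \<subseteq> C" "K \<subseteq> C'"
    using connected_components_of_maximal assms unfolding disjnt_def by blast+
  then show ?thesis
    using connected_components_of_disjoint[OF assms(1,2)] assms(4) unfolding disjnt_def by blast
qed

lemma three_components_not_in_two_connected:
  assumes C: "C1 \<in> connected_components_of X" "C2 \<in> connected_components_of X"
      "C3 \<in> connected_components_of X" "C1 \<noteq> C2" "C1 \<noteq> C3" "C2 \<noteq> C3"
    and K: "connectedin X K1" "connectedin X K2"
    and a: "a1 \<in> C1" "a2 \<in> C2" "a3 \<in> C3" "{a1, a2, a3} \<subseteq> K1 \<union> K2"
  shows False
proof -
  have "a1 \<in> K1 \<or> a1 \<in> K2" "a2 \<in> K1 \<or> a2 \<in> K2" "a3 \<in> K1 \<or> a3 \<in> K2" using a(4) by auto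
  then show False
    using connected_components_of_eqI[OF C(1,2) K(1), of a1 a2] connected_components_of_eqI[OF C(1,2) K(2), of a1 a2]
      connected_components_of_eqI[OF C(1,3) K(1), of a1 a3] connected_components_of_eqI[OF C(1,3) K(2), of a1 a3]
      connected_components_of_eqI[OF C(2,3) K(1), of a2 a3] connected_components_of_eqI[OF C(2,3) K(2), of a2 a3]
      C(4-6) a(1-3)
    by auto
qed

locale monotone_tree_fraisse =
  fixes \<F> :: "fgraph set" and D :: "fgraph \<Rightarrow> fgraph \<Rightarrow> (nat \<Rightarrow> nat) \<Rightarrow> bool"
    and F :: "nat \<Rightarrow> fgraph" and f :: "nat \<Rightarrow> nat \<Rightarrow> nat"
  assumes family: "proj_fraisse_family \<F> D"
    and trees: "\<forall>G\<in>\<F>. fin_tree G"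
    and monotone: "\<forall>B A g. D B A g \<longrightarrow> monotone_epi B A g"
    and splitting: "allows_splitting_edges \<F> D"
    and sequence: "fraisse_sequence \<F> D F f"
begin

lemma D_epi: "D B A g \<Longrightarrow> epi B A g"
  using family[unfolded proj_fraisse_family_def, THEN conjunct2, THEN conjunct1] by blast

lemma F_mem: "F n \<in> \<F>" and D_step: "D (F (Suc n)) (F n) (f n)"
  using sequence[unfolded fraisse_sequence_def, THEN conjunct1] by blast+

lemma fin_tree_F: "fin_tree (F n)"
  using trees F_mem by blast

lemma fraisse_extension:
  "D A (F m) h \<Longrightarrow> \<exists>n\<ge>m. \<exists>g. D (F n) A g \<and> (\<forall>x\<in>verts (F n). h (g x) = bond f n m x)"
  using sequence[unfolded fraisse_sequence_def, THEN conjunct2, THEN conjunct2] by blast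

lemma split_edge_collapse:
  "G \<in> \<F> \<Longrightarrow> (a, b) \<in> edges G \<Longrightarrow> a \<noteq> b \<Longrightarrow>
     \<exists>v. v \<notin> verts G \<and> D (split_edge G a b v) G (collapse v a)"
  using splitting unfolding allows_splitting_edges_def by blast

sublocale monotone_inverse_sequence F f
proof
  show "fin_graph (F n)" for n using fin_tree_F unfolding fin_tree_def by blast
  show "monotone_epi (F (Suc n)) (F n) (f n)" for n using monotone D_step by blast
qed

text \<open>Split the edge between u n and w n by a new vertex v and lift the collapse of v onto u n
  to a level m.  Then g is the bonding map away from the fibre of u n, and g sends u to v: it
  cannot send u to u n, which is no longer adjacent to w n = g (w m).\<close>
lemma lim_edge_split_level:
  assumes u: "u \<in> lim_verts F f" and w: "w \<in> lim_verts F f" and uw: "lim_edge F u w"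
    and un: "u n \<noteq> w n"
  obtains v m g where "v \<notin> verts (F n)" "n \<le> m" "D (F m) (split_edge (F n) (u n) (w n) v) g"
    "g (u m) = v" "\<And>z. z \<in> lim_verts F f \<Longrightarrow> z n \<noteq> u n \<Longrightarrow> g (z m) = z n"
proof -
  have e: "(u n, w n) \<in> edges (F n)" using uw unfolding lim_edge_def by blast
  obtain v where v: "v \<notin> verts (F n)" "D (split_edge (F n) (u n) (w n) v) (F n) (collapse v (u n))"
    using split_edge_collapse[OF F_mem e un] by blast
  obtain m g where m: "n \<le> m" and g: "D (F m) (split_edge (F n) (u n) (w n) v) g"
    and comm: "\<forall>t\<in>verts (F m). collapse v (u n) (g t) = bond f m n t"
    using fraisse_extension[OF v(2)] by blast
  have thread: "collapse v (u n) (g (z m)) = z n" if "z \<in> lim_verts F f" for z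
    using comm lim_verts_level[OF that] lim_verts_bond[OF that m] by metis
  have off_fibre: "g (z m) = z n" if "z \<in> lim_verts F f" "z n \<noteq> u n" for z
    using thread[OF that(1)] that(2) unfolding collapse_def by (auto split: if_splits)
  have "(g (u m), g (w m)) \<in> edges (split_edge (F n) (u n) (w n) v)"
    using epi_map_edge[OF fin_graph_F D_epi[OF g]] uw unfolding lim_edge_def by blast
  moreover have "g (w m) = w n" using off_fibre[OF w] un by simp
  moreover have "g (u m) = v \<or> g (u m) = u n"
    using thread[OF u] unfolding collapse_def by (auto split: if_splits)
  moreover have "u n \<in> verts (F n)" "w n \<in> verts (F n)" using u w lim_verts_level by auto
  ultimately have "g (u m) = v" using v(1) un by (auto simp: edges_split_edge)
  from v(1) m g this off_fibre show thesis by (rule that)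
qed

text \<open>Split the edge y n x n at a level where x, y, z differ: z, adjacent to y, would have to be
  adjacent to the new vertex, whose only neighbours are x n and y n.\<close>
lemma lim_edge_chain_not_distinct:
  assumes x: "x \<in> lim_verts F f" and y: "y \<in> lim_verts F f" and z: "z \<in> lim_verts F f"
    and xy: "lim_edge F x y" and yz: "lim_edge F y z"
  shows "x = y \<or> y = z \<or> x = z"
proof (rule ccontr)
  assume distinct: "\<not> ?thesis"
  obtain n where inj: "inj_on (\<lambda>t. t n) {x, y, z}"
    by (rule lim_verts_inj_level[of "{x, y, z}"]) (use x y z in auto)
  with distinct have n: "x n \<noteq> y n" "y n \<noteq> z n" "x n \<noteq> z n"
    by (metis inj_onD insertCI)+
  obtain v m g where v: "v \<notin> verts (F n)" and g: "D (F m) (split_edge (F n) (y n) (x n) v) g"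
    and gy: "g (y m) = v" and off_fibre: "\<And>t. t \<in> lim_verts F f \<Longrightarrow> t n \<noteq> y n \<Longrightarrow> g (t m) = t n"
    using lim_edge_split_level[OF y x lim_edge_sym[OF xy]] n(1) by metis
  have "(g (y m), g (z m)) \<in> edges (split_edge (F n) (y n) (x n) v)"
    using epi_map_edge[OF fin_graph_F D_epi[OF g]] yz unfolding lim_edge_def by blast
  then have "(v, z n) \<in> edges (split_edge (F n) (y n) (x n) v)"
    using gy off_fibre[OF z] n(2) by simp
  moreover have "z n \<in> verts (F n)" using z by (rule lim_verts_level)
  ultimately show False
    using v n(2,3) fin_graph_edge_verts[OF fin_graph_F] by (auto simp: edges_split_edge)
qed

lemma lim_edge_trans:
  "x \<in> lim_verts F f \<Longrightarrow> y \<in> lim_verts F f \<Longrightarrow> z \<in> lim_verts F f \<Longrightarrow>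
    lim_edge F x y \<Longrightarrow> lim_edge F y z \<Longrightarrow> lim_edge F x z"
  using lim_edge_chain_not_distinct lim_edge_refl by metis

lemma realization_map_eq_iff:
  assumes "x \<in> lim_verts F f" "y \<in> lim_verts F f"
  shows "realization_map F f x = realization_map F f y \<longleftrightarrow> lim_edge F x y"
proof
  assume "realization_map F f x = realization_map F f y"
  moreover have "y \<in> realization_map F f y"
    unfolding realization_map_def using assms(2) lim_edge_refl by blast
  ultimately show "lim_edge F x y" unfolding realization_map_def by blast
next
  assume "lim_edge F x y"
  then show "realization_map F f x = realization_map F f y"
    unfolding realization_map_def using assms lim_edge_trans lim_edge_sym by blast
qed

lemma realization_fibre:
  assumes "x \<in> lim_verts F f" "y \<in> lim_verts F f" "lim_edge F x y" "x \<noteq> y"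
    and "z \<in> lim_verts F f" "realization_map F f z = realization_map F f x"
  shows "z = x \<or> z = y"
  using assms lim_edge_chain_not_distinct[of y x z] realization_map_eq_iff lim_edge_sym by metis

text \<open>The preimage under the lifted map g of a connected C avoiding w n: monotonicity keeps it
  connected, u and w drop out (u lands on the new vertex), and every other thread through C
  stays in because g is the bonding map off the fibre of u n.\<close>
lemma lim_edge_side_cylinder:
  assumes u: "u \<in> lim_verts F f" and w: "w \<in> lim_verts F f" and uw: "lim_edge F u w"
    and un: "u n \<noteq> w n"
    and C: "C \<subseteq> verts (F n)" "conn_set (F n) C" "w n \<notin> C"
  obtains m T where "T \<subseteq> verts (F m)" "conn_set (F m) T"
    "u \<notin> lim_cylinder F f m T" "w \<notin> lim_cylinder F f m T"
    "lim_cylinder F f n (C - {u n}) \<subseteq> lim_cylinder F f m T"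
proof -
  obtain v m g where v: "v \<notin> verts (F n)" and g: "D (F m) (split_edge (F n) (u n) (w n) v) g"
    and gu: "g (u m) = v" and off_fibre: "\<And>z. z \<in> lim_verts F f \<Longrightarrow> z n \<noteq> u n \<Longrightarrow> g (z m) = z n"
    using lim_edge_split_level[OF u w uw un] by metis
  let ?G = "split_edge (F n) (u n) (w n) v"
  define T where "T = {t \<in> verts (F m). g t \<in> C}"
  have "v \<notin> C" using v C(1) by blast
  then have conn_G: "conn_set ?G C"
    using C(2,3) by (intro conn_set_transfer[OF C(2)]) (auto simp: edges_split_edge)
  have mono_g: "monotone_epi (F m) ?G g" using monotone g by blast
  have C_G: "C \<subseteq> verts ?G" using C(1) by (auto simp: verts_split_edge)
  have "T \<subseteq> verts (F m)" unfolding T_def by blast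
  moreover have "conn_set (F m) T"
    unfolding T_def by (rule conn_set_monotone_preimage[OF mono_g C_G conn_G])
  moreover have "u \<notin> lim_cylinder F f m T" "w \<notin> lim_cylinder F f m T"
    using gu \<open>v \<notin> C\<close> off_fibre[OF w] un C(3) unfolding T_def lim_cylinder_def by auto
  moreover have "lim_cylinder F f n (C - {u n}) \<subseteq> lim_cylinder F f m T"
    using off_fibre lim_verts_level unfolding T_def lim_cylinder_def by auto
  ultimately show thesis by (rule that)
qed

lemma realization_edge_side_connected:
  assumes x: "x \<in> lim_verts F f" and y: "y \<in> lim_verts F f" and xy: "lim_edge F x y"
    and n: "x n \<noteq> y n"
  obtains K where "connectedin (realization F f) K" "realization_map F f x \<notin> K"
    "realization_map F f ` lim_cylinder F f n (edge_side (F n) (x n) (y n) - {x n}) \<subseteq> K"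
proof -
  let ?\<pi> = "realization_map F f"
  have e: "(x n, y n) \<in> edges (F n)" using xy unfolding lim_edge_def by blast
  have "x n \<in> verts (F n)" using x by (rule lim_verts_level)
  obtain m T where T: "T \<subseteq> verts (F m)" "conn_set (F m) T"
      "x \<notin> lim_cylinder F f m T" "y \<notin> lim_cylinder F f m T"
      "lim_cylinder F f n (edge_side (F n) (x n) (y n) - {x n}) \<subseteq> lim_cylinder F f m T"
    using lim_edge_side_cylinder[OF x y xy n edge_side_subset
        conn_set_edge_side[OF fin_graph_F \<open>x n \<in> verts (F n)\<close>] edge_side_not_mem[OF fin_tree_F e n]] .
  have "?\<pi> x \<notin> ?\<pi> ` lim_cylinder F f m T"
  proof
    assume "?\<pi> x \<in> ?\<pi> ` lim_cylinder F f m T"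
    then obtain z where z: "z \<in> lim_cylinder F f m T" "?\<pi> z = ?\<pi> x" by force
    then have "z = x \<or> z = y"
      using realization_fibre[OF x y xy] n unfolding lim_cylinder_def by auto
    with z(1) T(3,4) show False by blast
  qed
  moreover have "connectedin (realization F f) (?\<pi> ` lim_cylinder F f m T)"
    using connectedin_realization_cylinder[OF realization_map_eq_iff[THEN iffD2] T(1,2)] .
  ultimately show thesis using T(5) that by blast
qed

lemma realization_two_connected_cover:
  assumes x: "x \<in> lim_verts F f" and y: "y \<in> lim_verts F f" and xy: "lim_edge F x y" "x \<noteq> y"
    and S: "finite S" "S \<subseteq> lim_verts F f - {x, y}"
  obtains K1 K2 where "connectedin (realization F f) K1" "connectedin (realization F f) K2"
    "realization_map F f x \<notin> K1 \<union> K2" "realization_map F f ` S \<subseteq> K1 \<union> K2"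
proof -
  let ?\<pi> = "realization_map F f"
  obtain n where inj: "inj_on (\<lambda>z. z n) (insert x (insert y S))"
    by (rule lim_verts_inj_level[of "insert x (insert y S)"]) (use S x y in auto)
  have n: "x n \<noteq> y n" using inj xy(2) by (metis inj_onD insertCI)
  have S_n: "z n \<noteq> x n \<and> z n \<noteq> y n" if "z \<in> S" for z
    using inj that S(2) by (metis DiffD2 inj_onD insertCI subsetD)
  let ?A = "edge_side (F n) (x n) (y n)" and ?B = "edge_side (F n) (y n) (x n)"
  obtain K1 where K1: "connectedin (realization F f) K1" "?\<pi> x \<notin> K1"
      "?\<pi> ` lim_cylinder F f n (?A - {x n}) \<subseteq> K1"
    using realization_edge_side_connected[OF x y xy(1) n] .
  obtain K2 where K2: "connectedin (realization F f) K2" "?\<pi> y \<notin> K2"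
      "?\<pi> ` lim_cylinder F f n (?B - {y n}) \<subseteq> K2"
    using realization_edge_side_connected[OF y x lim_edge_sym[OF xy(1)] n[symmetric]] .
  have "?\<pi> y = ?\<pi> x" using realization_map_eq_iff[OF y x] lim_edge_sym[OF xy(1)] by blast
  have e: "(x n, y n) \<in> edges (F n)" using xy(1) unfolding lim_edge_def by blast
  have "z \<in> lim_cylinder F f n (?A - {x n}) \<union> lim_cylinder F f n (?B - {y n})" if "z \<in> S" for z
  proof -
    have "z \<in> lim_verts F f" using S(2) that by blast
    moreover have "z n \<in> ?A \<union> ?B"
      using lim_verts_level[OF \<open>z \<in> lim_verts F f\<close>] edge_side_Un[OF fin_tree_F e] by blast
    ultimately show ?thesis using S_n[OF that] unfolding lim_cylinder_def by blast
  qed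
  then have "?\<pi> ` S \<subseteq> K1 \<union> K2" using K1(3) K2(3) by blast
  with K1(1,2) K2(1,2) \<open>?\<pi> y = ?\<pi> x\<close> show thesis using that by auto
qed

lemma ramification_point_unique_preimage:
  assumes ram: "ramification_point (realization F f) p"
  shows "\<exists>!p'. p' \<in> lim_verts F f \<and> realization_map F f p' = p"
proof -
  let ?X = "realization F f" and ?\<pi> = "realization_map F f"
  let ?Y = "subtopology ?X (topspace ?X - {p})"
  obtain x where x: "x \<in> lim_verts F f" "?\<pi> x = p"
    using ram topspace_realization unfolding ramification_point_def by auto
  moreover have "y = x" if y: "y \<in> lim_verts F f" "?\<pi> y = p" for y
  proof (rule ccontr)
    assume "y \<noteq> x"
    have xy: "lim_edge F x y" using realization_map_eq_iff[OF x(1) y(1)] x(2) y(2) by simp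
    have pick: "\<exists>z\<in>lim_verts F f - {x, y}. ?\<pi> z \<in> C" if C: "C \<in> connected_components_of ?Y" for C
    proof -
      obtain q where "q \<in> C" using nonempty_connected_components_of[OF C] by blast
      then have "q \<in> topspace ?X - {p}"
        using connected_components_of_subset[OF C] by fastforce
      then obtain z where "z \<in> lim_verts F f" "?\<pi> z = q" "q \<noteq> p"
        using topspace_realization by auto
      then show ?thesis using \<open>q \<in> C\<close> x(2) y(2) by blast
    qed
    obtain C1 C2 C3 where C: "C1 \<in> connected_components_of ?Y" "C2 \<in> connected_components_of ?Y"
        "C3 \<in> connected_components_of ?Y" "C1 \<noteq> C2" "C1 \<noteq> C3" "C2 \<noteq> C3"
      using ram three_distinct_elements unfolding ramification_point_def Let_def by metis
    obtain z1 z2 z3 where z: "z1 \<in> lim_verts F f - {x, y}" "z2 \<in> lim_verts F f - {x, y}"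
        "z3 \<in> lim_verts F f - {x, y}" "?\<pi> z1 \<in> C1" "?\<pi> z2 \<in> C2" "?\<pi> z3 \<in> C3"
      using pick[OF C(1)] pick[OF C(2)] pick[OF C(3)] by blast
    obtain K1 K2 where K: "connectedin ?X K1" "connectedin ?X K2" "p \<notin> K1 \<union> K2"
        "?\<pi> ` {z1, z2, z3} \<subseteq> K1 \<union> K2"
      using realization_two_connected_cover[OF x(1) y(1) xy, of "{z1, z2, z3}"] \<open>y \<noteq> x\<close> z(1-3) x(2)
      by auto
    have "connectedin ?Y K1" "connectedin ?Y K2"
      using K connectedin_subset_topspace by (auto simp: connectedin_subtopology)
    with C z(4-6) K(4) show False by (intro three_components_not_in_two_connected) auto
  qed
  ultimately show ?thesis by blast
qed

end

theorem mainTheorem2: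
  fixes \<F> :: "fgraph set"
    and D :: "fgraph \<Rightarrow> fgraph \<Rightarrow> (nat \<Rightarrow> nat) \<Rightarrow> bool"
    and F :: "nat \<Rightarrow> fgraph" and f :: "nat \<Rightarrow> nat \<Rightarrow> nat"
    and p :: "(nat \<Rightarrow> nat) set"
  assumes "proj_fraisse_family \<F> D"
    and "\<forall>G\<in>\<F>. fin_tree G"
    and "\<forall>B A g. D B A g \<longrightarrow> monotone_epi B A g"
    and "allows_splitting_edges \<F> D"
    and "fraisse_sequence \<F> D F f"
    and "ramification_point (realization F f) p"
  shows "\<exists>!p'. p' \<in> lim_verts F f \<and> realization_map F f p' = p"
proof -
  interpret monotone_tree_fraisse \<F> D F f
    using assms(1-5) by unfold_locales
  show ?thesis using ramification_point_unique_preimage[OF assms(6)] .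
qed

end
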